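(* Let $G=(V,E)$ be a connected undirected graph and $\bm q$ a probability distribution on $V$. Then $G$ is an $\alpha$-insensitive equilibrium in the add-delete-model (with jump distribution $\bm q$) if and only if $G$ is a complete graph.
   Context: PageRank. For $\alpha\in(0,1)$ and distribution $\bm q$, for a directed graph $D$ let $\Gamma(u)$ be the out-neighbour set; the potential $\phi_{uv}$ is the probability that an $\alpha$-random walk (with probability $\alpha$ jump to a vertex drawn from $\bm q$, otherwise move to a uniformly random out-neighbour; a vertex with no out-neighbours forces a jump) started at $u$ visits $v$ before its first jump; for $\Gamma(v)\ne\emptyset$ the PageRank is $\pi_v=\alpha\,\frac{\sum_{u}q_u\phi_{uv}}{1-\frac{1-\alpha}{|\Gamma(v)|}\sum_{i\in\Gamma(v)}\phi_{iv}}$ (the stationary probability of $v$ when no out-degree is $0$). Undirected graphs are identified with bidirected graphs; $\pi^H_w$ is the PageRank of $w$ in $H$. Add-delete-model. A strategy of a vertex $v$ of $G$ is a subset $E_v\subseteq\Gamma(v)$ of neighbours to keep together with at most one non-neighbour $u\ne v$; the resulting graph $G'$ is obtained by deleting edges $vw$, $w\in\Gamma(v)\setminus E_v$, and adding $uv$ if $u$ is chosen ($v$ must keep at least one neighbour in $G'$). It is admissible if no edge is added, or the edge $uv$ is added and $\pi^{G'}_u>\pi^G_u$. $v$ is in best response if no admissible strategy gives $\pi^{G'}_v>\pi^G_v$; $G$ is a Nash equilibrium (for given $\alpha,\bm q$) if every vertex is in best response. $G$ is an $\alpha$-insensitive equilibrium if it is a Nash equilibrium in the add-delete-model for every $\alpha\in(0,1)$.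 *)

theory Defs
  imports Complex_Main
begin

text \<open>Directed graphs on a finite vertex type are sets of arcs; an undirected graph
is identified with the bidirected graph (a symmetric arc set).\<close>

definition out_nbrs :: "('a \<times> 'a) set \<Rightarrow> 'a \<Rightarrow> 'a set" where
  "out_nbrs D u = {w. (u, w) \<in> D}"

text \<open>hit_prob alpha D v n u: probability that the alpha-random walk started at u
visits v within the first n steps and before its first jump (a vertex without
out-neighbours forces a jump).\<close>

primrec hit_prob :: "real \<Rightarrow> ('a \<times> 'a) set \<Rightarrow> 'a \<Rightarrow> nat \<Rightarrow> 'a \<Rightarrow> real" where
  "hit_prob alpha D v 0 u = (if u = v then 1 else 0)"
| "hit_prob alpha D v (Suc n) u =
     (if u = v then 1
      else if out_nbrs D u = {} then 0
      else (1 - alpha) / real (card (out_nbrs D u)) * (\<Sum>i\<in>out_nbrs D u. hit_prob alpha D v n i))"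

text \<open>The potential phi_uv: probability that the walk from u visits v before its
first jump (limit of the non-decreasing sequence above).\<close>

definition potential :: "real \<Rightarrow> ('a \<times> 'a) set \<Rightarrow> 'a \<Rightarrow> 'a \<Rightarrow> real" where
  "potential alpha D u v = lim (\<lambda>n. hit_prob alpha D v n u)"

definition pagerank :: "real \<Rightarrow> ('a::finite \<Rightarrow> real) \<Rightarrow> ('a \<times> 'a) set \<Rightarrow> 'a \<Rightarrow> real" where
  "pagerank alpha q D v =
     alpha * (\<Sum>u\<in>UNIV. q u * potential alpha D u v) /
     (1 - (1 - alpha) / real (card (out_nbrs D v)) * (\<Sum>i\<in>out_nbrs D v. potential alpha D i v))"

definition deviate :: "('a \<times> 'a) set \<Rightarrow> 'a \<Rightarrow> 'a set \<Rightarrow> 'a option \<Rightarrow> ('a \<times> 'a) set" where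
  "deviate E v Ev uo =
     (E - {(v, w) | w. w \<in> out_nbrs E v - Ev} - {(w, v) | w. w \<in> out_nbrs E v - Ev})
     \<union> (case uo of None \<Rightarrow> {} | Some u \<Rightarrow> {(u, v), (v, u)})"

definition is_strategy :: "('a \<times> 'a) set \<Rightarrow> 'a \<Rightarrow> 'a set \<Rightarrow> 'a option \<Rightarrow> bool" where
  "is_strategy E v Ev uo \<longleftrightarrow>
     Ev \<subseteq> out_nbrs E v \<and>
     (case uo of None \<Rightarrow> True | Some u \<Rightarrow> u \<noteq> v \<and> u \<notin> out_nbrs E v) \<and>
     out_nbrs (deviate E v Ev uo) v \<noteq> {}"

definition admissible :: "real \<Rightarrow> ('a::finite \<Rightarrow> real) \<Rightarrow> ('a \<times> 'a) set \<Rightarrow> 'a \<Rightarrow> 'a set \<Rightarrow> 'a option \<Rightarrow> bool" where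
  "admissible alpha q E v Ev uo \<longleftrightarrow>
     (case uo of None \<Rightarrow> True
      | Some u \<Rightarrow> pagerank alpha q (deviate E v Ev uo) u > pagerank alpha q E u)"

definition best_response :: "real \<Rightarrow> ('a::finite \<Rightarrow> real) \<Rightarrow> ('a \<times> 'a) set \<Rightarrow> 'a \<Rightarrow> bool" where
  "best_response alpha q E v \<longleftrightarrow>
     (\<forall>Ev uo. is_strategy E v Ev uo \<and> admissible alpha q E v Ev uo \<longrightarrow>
        \<not> pagerank alpha q (deviate E v Ev uo) v > pagerank alpha q E v)"

definition nash_equilibrium :: "real \<Rightarrow> ('a::finite \<Rightarrow> real) \<Rightarrow> ('a \<times> 'a) set \<Rightarrow> bool" where
  "nash_equilibrium alpha q E \<longleftrightarrow> (\<forall>v. best_response alpha q E v)"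

definition alpha_insensitive_equilibrium :: "('a::finite \<Rightarrow> real) \<Rightarrow> ('a \<times> 'a) set \<Rightarrow> bool" where
  "alpha_insensitive_equilibrium q E \<longleftrightarrow>
     (\<forall>alpha. 0 < alpha \<and> alpha < 1 \<longrightarrow> nash_equilibrium alpha q E)"

definition undirected_graph :: "('a \<times> 'a) set \<Rightarrow> bool" where
  "undirected_graph E \<longleftrightarrow> sym E \<and> irrefl E"

definition connected_graph :: "('a \<times> 'a) set \<Rightarrow> bool" where
  "connected_graph E \<longleftrightarrow> (\<forall>u v. (u, v) \<in> E\<^sup>*)"

definition complete_graph :: "('a \<times> 'a) set \<Rightarrow> bool" where
  "complete_graph E \<longleftrightarrow> (\<forall>u v. u \<noteq> v \<longrightarrow> (u, v) \<in> E)"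

end

theory Submission
  imports Defs
begin

(* The potential phi_uv = potential a D u v is the limit of the truncated hitting
   probabilities; it is the unique bounded solution of the one-step equation
   phi_vv = 1, phi_uv = (1-a)/d(u) * sum of phi_iv over out-neighbours i, and every
   bounded supersolution dominates it.  This comparison principle gives
   (a) monotonicity of potentials in alpha and (b) that deleting arcs into v cannot
   raise potentials towards v.
   For symmetric graphs a Kac-type identity rewrites the PageRank as
   d(v) * sum_u q_u phi_uv / sum_i d(i) phi_iv; as alpha -> 0 all potentials tend to 1
   (a minimum principle for harmonic functions on a connected graph), so the PageRank
   tends to the degree share d(v) / vol(G).
   Complete graphs: the only strategies delete edges, the potentials of K_n are
   explicit and equal off v, so by (b) no deletion raises the PageRank of v.
   Non-complete graphs: adding a missing edge uv raises the degree shares of both u and v,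
   hence for small alpha it raises both PageRanks and is an admissible improvement. *)

lemma hit_prob_bounds:
  fixes D :: "('a::finite \<times> 'a) set"
  assumes "0 \<le> a" "a \<le> 1"
  shows "0 \<le> hit_prob a D v n u \<and> hit_prob a D v n u \<le> 1"
proof (induction n arbitrary: u)
  case 0
  then show ?case by simp
next
  case (Suc n)
  show ?case
  proof (cases "u = v \<or> out_nbrs D u = {}")
    case True
    then show ?thesis by auto
  next
    case False
    let ?S = "out_nbrs D u"
    have card_pos: "real (card ?S) > 0" using False by (simp add: card_gt_0_iff)
    have "(\<Sum>i\<in>?S. hit_prob a D v n i) \<le> real (card ?S)"
      using sum_bounded_above[of ?S "\<lambda>i. hit_prob a D v n i" 1] Suc by simp
    then have "(1 - a) / real (card ?S) * (\<Sum>i\<in>?S. hit_prob a D v n i)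
        \<le> (1 - a) / real (card ?S) * real (card ?S)"
      using assms by (intro mult_left_mono) auto
    then have "(1 - a) / real (card ?S) * (\<Sum>i\<in>?S. hit_prob a D v n i) \<le> 1 - a"
      using card_pos False by simp
    moreover have "0 \<le> (\<Sum>i\<in>?S. hit_prob a D v n i)"
      using Suc by (simp add: sum_nonneg)
    ultimately show ?thesis using False assms by simp
  qed
qed

lemma hit_prob_mono:
  fixes D :: "('a::finite \<times> 'a) set"
  assumes "0 \<le> a" "a \<le> 1"
  shows "hit_prob a D v n u \<le> hit_prob a D v (Suc n) u"
proof (induction n arbitrary: u)
  case 0
  show ?case using hit_prob_bounds[OF assms, of D v "Suc 0" u] by (cases "u = v") auto
next
  case (Suc n)
  have "(\<Sum>i\<in>out_nbrs D u. hit_prob a D v n i) \<le> (\<Sum>i\<in>out_nbrs D u. hit_prob a D v (Suc n) i)"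
    using Suc by (intro sum_mono) auto
  then have "(1 - a) / real (card (out_nbrs D u)) * (\<Sum>i\<in>out_nbrs D u. hit_prob a D v n i)
      \<le> (1 - a) / real (card (out_nbrs D u)) * (\<Sum>i\<in>out_nbrs D u. hit_prob a D v (Suc n) i)"
    using assms by (intro mult_left_mono) auto
  then show ?case by (simp only: hit_prob.simps) simp
qed

lemma potential_limit:
  fixes D :: "('a::finite \<times> 'a) set"
  assumes "0 \<le> a" "a \<le> 1"
  shows "(\<lambda>n. hit_prob a D v n u) \<longlonglongrightarrow> potential a D u v"
proof -
  have "incseq (\<lambda>n. hit_prob a D v n u)"
    unfolding incseq_Suc_iff using hit_prob_mono[OF assms] by blast
  moreover have "bdd_above (range (\<lambda>n. hit_prob a D v n u))"
    using hit_prob_bounds[OF assms] by (intro bdd_aboveI[of _ 1]) auto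
  ultimately have "convergent (\<lambda>n. hit_prob a D v n u)"
    using LIMSEQ_incseq_SUP by (auto simp: convergent_def)
  then show ?thesis unfolding potential_def by (simp add: convergent_LIMSEQ_iff)
qed

lemma potential_bounds:
  fixes D :: "('a::finite \<times> 'a) set"
  assumes "0 \<le> a" "a \<le> 1"
  shows "0 \<le> potential a D u v \<and> potential a D u v \<le> 1"
  using potential_limit[OF assms, of D v u] hit_prob_bounds[OF assms]
  by (meson LIMSEQ_le_const LIMSEQ_le_const2)

lemma potential_equation:
  fixes D :: "('a::finite \<times> 'a) set"
  assumes "0 \<le> a" "a \<le> 1"
  shows "potential a D u v = (if u = v then 1 else if out_nbrs D u = {} then 0
     else (1 - a) / real (card (out_nbrs D u)) * (\<Sum>i\<in>out_nbrs D u. potential a D i v))"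
proof -
  have "(\<lambda>n. hit_prob a D v (Suc n) u) \<longlonglongrightarrow> potential a D u v"
    using potential_limit[OF assms] LIMSEQ_Suc by blast
  moreover have "(\<lambda>n. hit_prob a D v (Suc n) u) \<longlonglongrightarrow> (if u = v then 1
      else if out_nbrs D u = {} then 0
      else (1 - a) / real (card (out_nbrs D u)) * (\<Sum>i\<in>out_nbrs D u. potential a D i v))"
    unfolding hit_prob.simps
    by (cases "u = v"; cases "out_nbrs D u = {}")
       (auto intro!: tendsto_intros potential_limit[OF assms])
  ultimately show ?thesis using LIMSEQ_unique by blast
qed

text \<open>For a positive jump probability the one-step equation is a contraction with factor
  1 - a, so its bounded solution is unique.\<close>

lemma potential_unique:
  fixes D :: "('a::finite \<times> 'a) set"
  assumes a: "0 < a" "a \<le> 1"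
    and fv: "f v = 1" and fb: "\<And>u. 0 \<le> f u \<and> f u \<le> 1"
    and feq: "\<And>u. u \<noteq> v \<Longrightarrow> f u = (if out_nbrs D u = {} then 0
         else (1 - a) / real (card (out_nbrs D u)) * (\<Sum>i\<in>out_nbrs D u. f i))"
  shows "potential a D u v = f u"
proof -
  have dist: "\<bar>hit_prob a D v n w - f w\<bar> \<le> (1 - a) ^ n" for n w
  proof (induction n arbitrary: w)
    case 0
    then show ?case using fv fb[of w] by auto
  next
    case (Suc n)
    show ?case
    proof (cases "w = v \<or> out_nbrs D w = {}")
      case True
      then show ?thesis using fv feq[of w] a by auto
    next
      case False
      let ?S = "out_nbrs D w"
      have card_pos: "real (card ?S) > 0" using False by (simp add: card_gt_0_iff)
      have "hit_prob a D v (Suc n) w - f w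
          = (1 - a) / real (card ?S) * (\<Sum>i\<in>?S. hit_prob a D v n i - f i)"
        using False feq[of w] by (simp add: sum_subtractf right_diff_distrib)
      then have "\<bar>hit_prob a D v (Suc n) w - f w\<bar>
          = (1 - a) / real (card ?S) * \<bar>\<Sum>i\<in>?S. hit_prob a D v n i - f i\<bar>"
        using a by (simp add: abs_mult)
      also have "\<dots> \<le> (1 - a) / real (card ?S) * (\<Sum>i\<in>?S. \<bar>hit_prob a D v n i - f i\<bar>)"
        using a by (intro mult_left_mono sum_abs) auto
      also have "\<dots> \<le> (1 - a) / real (card ?S) * (real (card ?S) * (1 - a) ^ n)"
        using a Suc sum_bounded_above[of ?S "\<lambda>i. \<bar>hit_prob a D v n i - f i\<bar>" "(1 - a) ^ n"]
        by (intro mult_left_mono) auto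
      also have "\<dots> = (1 - a) ^ Suc n" using card_pos False by simp
      finally show ?thesis .
    qed
  qed
  have "(\<lambda>n. (1 - a) ^ n) \<longlonglongrightarrow> 0" using a by (intro LIMSEQ_power_zero) auto
  then have "(\<lambda>n. hit_prob a D v n u - f u) \<longlonglongrightarrow> 0"
    by (rule tendsto_0_le[where K = 1]) (use dist a in \<open>auto intro!: always_eventually\<close>)
  then have "(\<lambda>n. hit_prob a D v n u) \<longlonglongrightarrow> f u" by (rule LIM_zero_cancel)
  then show ?thesis using potential_limit[OF less_imp_le[OF a(1)] a(2)] LIMSEQ_unique by blast
qed

lemma potential_le_supersolution:
  fixes D :: "('a::finite \<times> 'a) set"
  assumes a: "0 \<le> a" "a \<le> 1"
    and fv: "1 \<le> f v" and f_nonneg: "\<And>w. 0 \<le> f w"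
    and super: "\<And>w. w \<noteq> v \<Longrightarrow> out_nbrs D w \<noteq> {} \<Longrightarrow>
         (1 - a) / real (card (out_nbrs D w)) * (\<Sum>i\<in>out_nbrs D w. f i) \<le> f w"
  shows "potential a D u v \<le> f u"
proof -
  have "hit_prob a D v n w \<le> f w" for n w
  proof (induction n arbitrary: w)
    case 0
    then show ?case using fv f_nonneg[of w] by simp
  next
    case (Suc n)
    show ?case
    proof (cases "w = v \<or> out_nbrs D w = {}")
      case True
      then show ?thesis using fv f_nonneg[of w] by auto
    next
      case False
      have "(1 - a) / real (card (out_nbrs D w)) * (\<Sum>i\<in>out_nbrs D w. hit_prob a D v n i)
          \<le> (1 - a) / real (card (out_nbrs D w)) * (\<Sum>i\<in>out_nbrs D w. f i)"
        using Suc a by (intro mult_left_mono sum_mono) auto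
      also have "\<dots> \<le> f w" using False super by blast
      finally show ?thesis using False by simp
    qed
  qed
  then show ?thesis using potential_limit[OF a, of D v u] by (intro LIMSEQ_le_const2) auto
qed

lemma potential_antimono_alpha:
  fixes D :: "('a::finite \<times> 'a) set"
  assumes "0 \<le> a1" "a1 \<le> a2" "a2 \<le> 1"
  shows "potential a2 D u v \<le> potential a1 D u v"
proof (rule potential_le_supersolution)
  let ?f = "\<lambda>w. potential a1 D w v"
  show "0 \<le> a2" "a2 \<le> 1" using assms by auto
  show "1 \<le> ?f v" "0 \<le> ?f w" for w
    using potential_equation[of a1 D v v] potential_bounds[of a1 D w v] assms by auto
  show "(1 - a2) / real (card (out_nbrs D w)) * (\<Sum>i\<in>out_nbrs D w. ?f i) \<le> ?f w"
    if "w \<noteq> v" "out_nbrs D w \<noteq> {}" for w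
  proof -
    have "0 \<le> (\<Sum>i\<in>out_nbrs D w. ?f i)"
      using potential_bounds[of a1 D _ v] assms by (intro sum_nonneg) auto
    then have "(1 - a2) / real (card (out_nbrs D w)) * (\<Sum>i\<in>out_nbrs D w. ?f i)
        \<le> (1 - a1) / real (card (out_nbrs D w)) * (\<Sum>i\<in>out_nbrs D w. ?f i)"
      using assms by (intro mult_right_mono divide_right_mono) auto
    then show ?thesis using potential_equation[of a1 D w v] assms that by simp
  qed
qed


text \<open>(b) Removing arcs into the target v (and nothing else) cannot raise the potentials
  towards v: the old potentials are a supersolution, because dropping the maximal value
  phi_vv = 1 from a neighbourhood lowers its average.\<close>

lemma average_remove_max:
  fixes f :: "'a \<Rightarrow> real"
  assumes "finite S" "v \<in> S" "S - {v} \<noteq> {}" and max: "\<And>i. i \<in> S \<Longrightarrow> f i \<le> f v"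
  shows "(\<Sum>i\<in>S - {v}. f i) / real (card (S - {v})) \<le> (\<Sum>i\<in>S. f i) / real (card S)"
proof -
  let ?k = "real (card (S - {v}))"
  have "card (S - {v}) > 0" using assms(1,3) by (metis card_gt_0_iff finite_Diff)
  then have k_pos: "?k > 0" by simp
  have "Suc (card (S - {v})) = card S" by (rule card_Suc_Diff1[OF assms(1,2)])
  then have card_S: "real (card S) = ?k + 1" by (metis of_nat_Suc add.commute)
  have sum_S: "(\<Sum>i\<in>S. f i) = f v + (\<Sum>i\<in>S - {v}. f i)"
    using assms by (simp add: sum.remove)
  have "(\<Sum>i\<in>S - {v}. f i) \<le> ?k * f v"
    using sum_bounded_above[of "S - {v}" f "f v"] max by auto
  then show ?thesis using k_pos unfolding card_S sum_S by (simp add: field_simps)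
qed

lemma potential_mono_remove_arcs_into_target:
  fixes D E :: "('a::finite \<times> 'a) set"
  assumes a: "0 \<le> a" "a \<le> 1"
    and out: "\<And>w. w \<noteq> v \<Longrightarrow> out_nbrs D w = out_nbrs E w \<or> out_nbrs D w = out_nbrs E w - {v}"
  shows "potential a D u v \<le> potential a E u v"
proof (rule potential_le_supersolution[OF a])
  let ?f = "\<lambda>w. potential a E w v"
  have f_le: "?f i \<le> ?f v" for i
    using potential_bounds[OF a, of E i v] potential_equation[OF a, of E v v] by simp
  show "1 \<le> ?f v" "0 \<le> ?f w" for w
    using potential_equation[OF a, of E v v] potential_bounds[OF a, of E w v] by auto
  show "(1 - a) / real (card (out_nbrs D w)) * (\<Sum>i\<in>out_nbrs D w. ?f i) \<le> ?f w"
    if wv: "w \<noteq> v" and ne: "out_nbrs D w \<noteq> {}" for w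
  proof -
    let ?S = "out_nbrs E w"
    have avg_le: "(\<Sum>i\<in>out_nbrs D w. ?f i) / real (card (out_nbrs D w))
        \<le> (\<Sum>i\<in>?S. ?f i) / real (card ?S)"
    proof (cases "v \<in> ?S \<and> out_nbrs D w = ?S - {v}")
      case True
      then show ?thesis using average_remove_max[of ?S v ?f] ne f_le by auto
    next
      case False
      then have "out_nbrs D w = ?S" using out[OF wv] by auto
      then show ?thesis by simp
    qed
    have ne_E: "?S \<noteq> {}" using ne out[OF wv] by auto
    have "(1 - a) / real (card (out_nbrs D w)) * (\<Sum>i\<in>out_nbrs D w. ?f i)
        = (1 - a) * ((\<Sum>i\<in>out_nbrs D w. ?f i) / real (card (out_nbrs D w)))" by simp
    also have "\<dots> \<le> (1 - a) * ((\<Sum>i\<in>?S. ?f i) / real (card ?S))"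
      using avg_le a by (intro mult_left_mono) auto
    also have "\<dots> = ?f w" using potential_equation[OF a, of E w v] wv ne_E by simp
    finally show ?thesis .
  qed
qed

lemma return_term_bounds:
  fixes D :: "('a::finite \<times> 'a) set"
  assumes a: "0 \<le> a" "a \<le> 1"
  shows "0 \<le> (1 - a) / real (card (out_nbrs D v)) * (\<Sum>i\<in>out_nbrs D v. potential a D i v)
     \<and> (1 - a) / real (card (out_nbrs D v)) * (\<Sum>i\<in>out_nbrs D v. potential a D i v) \<le> 1 - a"
proof (cases "out_nbrs D v = {}")
  case True
  then show ?thesis using a by simp
next
  case False
  let ?S = "out_nbrs D v"
  have "(\<Sum>i\<in>?S. potential a D i v) \<le> real (card ?S)"
    using sum_bounded_above[of ?S "\<lambda>i. potential a D i v" 1] potential_bounds[OF a] by auto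
  then have "(1 - a) / real (card ?S) * (\<Sum>i\<in>?S. potential a D i v)
      \<le> (1 - a) / real (card ?S) * real (card ?S)"
    using a by (intro mult_left_mono) auto
  moreover have "0 \<le> (\<Sum>i\<in>?S. potential a D i v)"
    using potential_bounds[OF a] by (intro sum_nonneg) auto
  ultimately show ?thesis using False a by (simp add: card_gt_0_iff)
qed

lemma pagerank_le_pagerank:
  fixes D E :: "('a::finite \<times> 'a) set"
  assumes a: "0 < a" "a \<le> 1" and q_nonneg: "\<And>u. 0 \<le> q u"
    and pot: "\<And>u. potential a D u v \<le> potential a E u v"
    and ret: "(1 - a) / real (card (out_nbrs D v)) * (\<Sum>i\<in>out_nbrs D v. potential a D i v)
      \<le> (1 - a) / real (card (out_nbrs E v)) * (\<Sum>i\<in>out_nbrs E v. potential a E i v)"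
  shows "pagerank a q D v \<le> pagerank a q E v"
proof -
  let ?ND = "\<Sum>u\<in>UNIV. q u * potential a D u v"
  let ?NE = "\<Sum>u\<in>UNIV. q u * potential a E u v"
  let ?rD = "(1 - a) / real (card (out_nbrs D v)) * (\<Sum>i\<in>out_nbrs D v. potential a D i v)"
  let ?rE = "(1 - a) / real (card (out_nbrs E v)) * (\<Sum>i\<in>out_nbrs E v. potential a E i v)"
  have N_le: "?ND \<le> ?NE" using pot q_nonneg by (intro sum_mono mult_left_mono) auto
  have N_nonneg: "0 \<le> ?NE"
    using potential_bounds[of a E _ v] a q_nonneg by (intro sum_nonneg) auto
  have den_E: "a \<le> 1 - ?rE" using return_term_bounds[of a E v] a by simp
  have "pagerank a q D v = a * ?ND / (1 - ?rD)" unfolding pagerank_def ..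
  also have "\<dots> \<le> a * ?NE / (1 - ?rD)"
    using N_le den_E ret a by (intro divide_right_mono mult_left_mono) auto
  also have "\<dots> \<le> a * ?NE / (1 - ?rE)"
    using N_nonneg den_E ret a by (intro divide_left_mono) auto
  also have "\<dots> = pagerank a q E v" unfolding pagerank_def ..
  finally show ?thesis .
qed

lemma sum_over_arcs_sym:
  fixes D :: "('a::finite \<times> 'a) set"
  assumes "sym D"
  shows "(\<Sum>w\<in>UNIV. \<Sum>i\<in>out_nbrs D w. f i) = (\<Sum>i\<in>UNIV. real (card (out_nbrs D i)) * f i)"
proof -
  have out_as_filter: "(\<Sum>i\<in>out_nbrs D w. g i) = (\<Sum>i\<in>UNIV. if (w, i) \<in> D then g i else 0)"
    for w and g :: "'a \<Rightarrow> real"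
    unfolding out_nbrs_def using sum.inter_filter[of UNIV g "\<lambda>i. (w, i) \<in> D"] by simp
  have "(\<Sum>w\<in>UNIV. \<Sum>i\<in>out_nbrs D w. f i) = (\<Sum>w\<in>UNIV. \<Sum>i\<in>UNIV. if (w, i) \<in> D then f i else 0)"
    by (simp add: out_as_filter)
  also have "\<dots> = (\<Sum>i\<in>UNIV. \<Sum>w\<in>UNIV. if (w, i) \<in> D then f i else 0)"
    by (rule sum.swap)
  also have "\<dots> = (\<Sum>i\<in>UNIV. \<Sum>w\<in>UNIV. if (i, w) \<in> D then f i else 0)"
    using assms by (intro sum.cong refl) (auto dest: symD)
  also have "\<dots> = (\<Sum>i\<in>UNIV. \<Sum>w\<in>out_nbrs D i. f i)"
    by (rule sum.cong[OF refl], rule out_as_filter[symmetric])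
  finally show ?thesis by simp
qed

text \<open>Kac-type identity: in a symmetric graph without sinks, summing the one-step equations
  weighted by degrees gives d(v) - (1 - a) sum_{i ~ v} phi_iv = a sum_i d(i) phi_iv.\<close>

lemma potential_degree_identity:
  fixes D :: "('a::finite \<times> 'a) set"
  assumes "sym D" "0 < a" "a < 1" and ne: "\<And>w. out_nbrs D w \<noteq> {}"
  shows "real (card (out_nbrs D v)) - (1 - a) * (\<Sum>i\<in>out_nbrs D v. potential a D i v)
       = a * (\<Sum>i\<in>UNIV. real (card (out_nbrs D i)) * potential a D i v)"
proof -
  define \<phi> where "\<phi> i = potential a D i v" for i
  define d where "d i = real (card (out_nbrs D i))" for i
  have step: "(1 - a) * (\<Sum>i\<in>out_nbrs D w. \<phi> i) = d w * \<phi> w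
     + (if w = v then (1 - a) * (\<Sum>i\<in>out_nbrs D v. \<phi> i) - d v else 0)" for w
  proof (cases "w = v")
    case True
    then show ?thesis using potential_equation[of a D v v] assms unfolding \<phi>_def by simp
  next
    case False
    have "d w > 0" using ne[of w] unfolding d_def by (simp add: card_gt_0_iff)
    moreover have "\<phi> w = (1 - a) / d w * (\<Sum>i\<in>out_nbrs D w. \<phi> i)"
      unfolding \<phi>_def d_def using potential_equation[of a D w v] assms False ne[of w] by simp
    ultimately show ?thesis using False by (simp add: field_simps)
  qed
  have arcs: "(\<Sum>i\<in>UNIV. d i * \<phi> i) = (\<Sum>w\<in>UNIV. \<Sum>i\<in>out_nbrs D w. \<phi> i)"
    using sum_over_arcs_sym[OF assms(1), of \<phi>] unfolding d_def by simp
  have "(1 - a) * (\<Sum>i\<in>UNIV. d i * \<phi> i) = (\<Sum>w\<in>UNIV. (1 - a) * (\<Sum>i\<in>out_nbrs D w. \<phi> i))"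
    unfolding arcs by (rule sum_distrib_left)
  also have "\<dots> = (\<Sum>w\<in>UNIV. d w * \<phi> w
      + (if w = v then (1 - a) * (\<Sum>i\<in>out_nbrs D v. \<phi> i) - d v else 0))"
    by (rule sum.cong[OF refl step])
  also have "\<dots> = (\<Sum>w\<in>UNIV. d w * \<phi> w) + ((1 - a) * (\<Sum>i\<in>out_nbrs D v. \<phi> i) - d v)"
    by (simp add: sum.distrib)
  finally show ?thesis unfolding \<phi>_def d_def by (simp add: algebra_simps)
qed

lemma pagerank_sym_formula:
  fixes D :: "('a::finite \<times> 'a) set"
  assumes "sym D" "0 < a" "a < 1" and ne: "\<And>w. out_nbrs D w \<noteq> {}"
  shows "pagerank a q D v = real (card (out_nbrs D v)) * (\<Sum>u\<in>UNIV. q u * potential a D u v)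
          / (\<Sum>i\<in>UNIV. real (card (out_nbrs D i)) * potential a D i v)"
proof -
  define dv where "dv = real (card (out_nbrs D v))"
  define s where "s = (\<Sum>i\<in>out_nbrs D v. potential a D i v)"
  define S where "S = (\<Sum>i\<in>UNIV. real (card (out_nbrs D i)) * potential a D i v)"
  have dv_pos: "dv > 0" unfolding dv_def using ne[of v] by (simp add: card_gt_0_iff)
  have "dv - (1 - a) * s = a * S"
    unfolding dv_def s_def S_def by (rule potential_degree_identity[OF assms])
  then have den: "1 - (1 - a) / dv * s = a * S / dv" using dv_pos by (simp add: field_simps)
  show ?thesis
    unfolding pagerank_def dv_def[symmetric] s_def[symmetric] S_def[symmetric] den
    using assms(2) dv_pos by (simp add: field_simps)
qed


text \<open>Minimum principle: on a strongly connected graph without sinks, a function bounded by 1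
  that equals 1 at v and is harmonic (mean value property) everywhere else is constant 1:
  its minimum value propagates along arcs and would reach v.\<close>

lemma harmonic_min_principle:
  fixes D :: "('a::finite \<times> 'a) set" and g :: "'a \<Rightarrow> real"
  assumes conn: "\<And>x y. (x, y) \<in> D\<^sup>*" and ne: "\<And>w. out_nbrs D w \<noteq> {}"
    and gv: "g v = 1" and g_le: "\<And>w. g w \<le> 1"
    and harmonic: "\<And>w. w \<noteq> v \<Longrightarrow> g w = (\<Sum>i\<in>out_nbrs D w. g i) / real (card (out_nbrs D w))"
  shows "g u = 1"
proof -
  define m where "m = Min (range g)"
  have m_le: "m \<le> g w" for w unfolding m_def by (intro Min_le) auto
  have "m \<in> range g" unfolding m_def by (intro Min_in) auto
  then obtain w0 where w0: "g w0 = m" by auto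
  have "1 \<le> m"
  proof (rule ccontr)
    assume "\<not> 1 \<le> m"
    then have m_lt: "m < 1" by simp
    have propagate: "g x = m" if "g w = m" "(w, x) \<in> D" for w x
    proof -
      let ?S = "out_nbrs D w"
      have "w \<noteq> v" using that m_lt gv by auto
      moreover have "real (card ?S) > 0" using ne[of w] by (simp add: card_gt_0_iff)
      ultimately have "(\<Sum>i\<in>?S. g i) = real (card ?S) * m"
        using harmonic[of w] that(1) by (simp add: field_simps)
      then have "(\<Sum>i\<in>?S. g i - m) = 0" by (simp add: sum_subtractf)
      then have "\<forall>i\<in>?S. g i - m = 0"
        using sum_nonneg_eq_0_iff[of ?S "\<lambda>i. g i - m"] m_le by auto
      moreover have "x \<in> ?S" using that(2) unfolding out_nbrs_def by simp
      ultimately show ?thesis by simp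
    qed
    have "(w0, v) \<in> D\<^sup>*" by (rule conn)
    then have "g v = m" by (induction rule: rtrancl_induct) (use w0 propagate in auto)
    then show False using gv m_lt by simp
  qed
  then show ?thesis using m_le[of u] g_le[of u] by simp
qed

definition alpha_seq :: "nat \<Rightarrow> real" where
  "alpha_seq k = 1 / (real k + 2)"

lemma alpha_seq_bounds: "0 < alpha_seq k" "alpha_seq k < 1"
  unfolding alpha_seq_def by (auto simp: field_simps)

lemma alpha_seq_limit: "alpha_seq \<longlonglongrightarrow> 0"
proof -
  have "(\<lambda>k. 1 / real (k + 2)) \<longlonglongrightarrow> 0"
    using LIMSEQ_ignore_initial_segment[OF lim_const_over_n[of 1], of 2] by simp
  then show ?thesis unfolding alpha_seq_def by (simp add: add.commute)
qed

lemma alpha_seq_antimono: "m \<le> k \<Longrightarrow> alpha_seq k \<le> alpha_seq m"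
  unfolding alpha_seq_def by (simp add: frac_le)

text \<open>As the jump probability vanishes, every potential tends to 1: the potentials increase
  along the sequence, and their limit is harmonic off v, hence 1 by the minimum principle.\<close>

lemma potential_tends_to_one:
  fixes D :: "('a::finite \<times> 'a) set"
  assumes conn: "\<And>x y. (x, y) \<in> D\<^sup>*" and ne: "\<And>w. out_nbrs D w \<noteq> {}"
  shows "(\<lambda>k. potential (alpha_seq k) D u v) \<longlonglongrightarrow> 1"
proof -
  have a: "0 \<le> alpha_seq k" "alpha_seq k \<le> 1" for k using alpha_seq_bounds[of k] by auto
  define g where "g w = lim (\<lambda>k. potential (alpha_seq k) D w v)" for w
  have lim_g: "(\<lambda>k. potential (alpha_seq k) D w v) \<longlonglongrightarrow> g w" for w
  proof -
    have "incseq (\<lambda>k. potential (alpha_seq k) D w v)"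
      by (rule incseq_SucI, rule potential_antimono_alpha) (use a alpha_seq_antimono in auto)
    moreover have "bdd_above (range (\<lambda>k. potential (alpha_seq k) D w v))"
      using potential_bounds a by (intro bdd_aboveI[of _ 1]) blast
    ultimately have "convergent (\<lambda>k. potential (alpha_seq k) D w v)"
      using LIMSEQ_incseq_SUP by (auto simp: convergent_def)
    then show ?thesis unfolding g_def by (simp add: convergent_LIMSEQ_iff)
  qed
  have "potential (alpha_seq k) D v v = 1" for k
    using potential_equation[of "alpha_seq k" D v v] a by simp
  then have gv: "g v = 1" using lim_g[of v] LIMSEQ_unique[OF _ tendsto_const] by simp
  have g_le: "g w \<le> 1" for w
    using lim_g[of w] potential_bounds a by (intro LIMSEQ_le_const2) blast+
  have harmonic: "g w = (\<Sum>i\<in>out_nbrs D w. g i) / real (card (out_nbrs D w))" if "w \<noteq> v" for w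
  proof -
    have eq: "potential (alpha_seq k) D w v = (1 - alpha_seq k) / real (card (out_nbrs D w))
        * (\<Sum>i\<in>out_nbrs D w. potential (alpha_seq k) D i v)" for k
      using potential_equation[of "alpha_seq k" D w v] a that ne[of w] by simp
    have "(\<lambda>k. (1 - alpha_seq k) / real (card (out_nbrs D w))
        * (\<Sum>i\<in>out_nbrs D w. potential (alpha_seq k) D i v))
        \<longlonglongrightarrow> (1 - 0) / real (card (out_nbrs D w)) * (\<Sum>i\<in>out_nbrs D w. g i)"
      by (intro tendsto_intros alpha_seq_limit lim_g) (use ne[of w] in simp)
    then have "(\<lambda>k. potential (alpha_seq k) D w v)
        \<longlonglongrightarrow> (\<Sum>i\<in>out_nbrs D w. g i) / real (card (out_nbrs D w))"
      unfolding eq by simp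
    then show ?thesis using LIMSEQ_unique lim_g by blast
  qed
  have "g u = 1" by (rule harmonic_min_principle[OF conn ne gv g_le harmonic])
  then show ?thesis using lim_g[of u] by simp
qed

lemma pagerank_tends_to_degree_share:
  fixes D :: "('a::finite \<times> 'a) set"
  assumes "sym D" and conn: "\<And>x y. (x, y) \<in> D\<^sup>*" and ne: "\<And>w. out_nbrs D w \<noteq> {}"
    and q_sum: "(\<Sum>v\<in>UNIV. q v) = 1"
  shows "(\<lambda>k. pagerank (alpha_seq k) q D v) \<longlonglongrightarrow>
      real (card (out_nbrs D v)) / (\<Sum>i\<in>UNIV. real (card (out_nbrs D i)))"
proof -
  have vol_pos: "(\<Sum>i\<in>UNIV. real (card (out_nbrs D i))) > 0"
    using ne by (intro sum_pos) (auto simp: card_gt_0_iff)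
  have "(\<lambda>k. real (card (out_nbrs D v)) * (\<Sum>u\<in>UNIV. q u * potential (alpha_seq k) D u v)
          / (\<Sum>i\<in>UNIV. real (card (out_nbrs D i)) * potential (alpha_seq k) D i v))
     \<longlonglongrightarrow> real (card (out_nbrs D v)) * (\<Sum>u\<in>UNIV. q u * 1)
          / (\<Sum>i\<in>UNIV. real (card (out_nbrs D i)) * 1)"
    using vol_pos by (intro tendsto_intros potential_tends_to_one[OF conn ne]) simp
  then show ?thesis
    unfolding pagerank_sym_formula[OF assms(1) alpha_seq_bounds ne] using q_sum by simp
qed


text \<open>Potentials in the complete graph K_n: all vertices other than the target have the
  same potential c = (1 - a) / (1 + (n - 2) a), since this constant profile solves the
  one-step equation and its solution is unique.\<close>

lemma complete_graph_potential:
  fixes E :: "('a::finite \<times> 'a) set"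
  assumes irr: "\<And>x. (x, x) \<notin> E" and comp: "\<And>x y. x \<noteq> y \<Longrightarrow> (x, y) \<in> E"
    and a: "0 < a" "a < 1" and n2: "2 \<le> card (UNIV :: 'a set)"
  shows "potential a E w v
    = (if w = v then 1 else (1 - a) / (1 + (real (card (UNIV :: 'a set)) - 2) * a))"
proof -
  define n where "n = real (card (UNIV :: 'a set))"
  define c where "c = (1 - a) / (1 + (n - 2) * a)"
  have out: "out_nbrs E u = UNIV - {u}" for u
    using irr comp unfolding out_nbrs_def by auto
  have den_pos: "1 + (n - 2) * a > 0" using n2 a unfolding n_def by (simp add: add_pos_nonneg)
  have c_bounds: "0 \<le> c" "c \<le> 1"
    using a den_pos n2 unfolding c_def n_def by (auto simp: field_simps)
  have fixed_point: "(1 - a) / (n - 1) * (1 + (n - 2) * c) = c"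
  proof -
    have "c * (1 + (n - 2) * a) = 1 - a" using den_pos unfolding c_def by simp
    moreover have "(1 - a) * (1 + (n - 2) * c) - c * (n - 1) = (1 - a) - c * (1 + (n - 2) * a)"
      by (simp add: algebra_simps)
    moreover have "n - 1 > 0" using n2 unfolding n_def by simp
    ultimately show ?thesis by (simp add: field_simps)
  qed
  have neighbour_sum: "(\<Sum>i\<in>UNIV - {u}. if i = v then 1 else c) = 1 + (n - 2) * c"
    if "u \<noteq> v" for u
  proof -
    have "(\<Sum>i\<in>UNIV - {u}. if i = v then 1 else c) = 1 + (\<Sum>i\<in>UNIV - {u} - {v}. c)"
      using that by (simp add: sum.remove[of "UNIV - {u}" v])
    also have "\<dots> = 1 + (n - 2) * c"
      using that n2 unfolding n_def by (simp add: card_Diff_singleton of_nat_diff)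
    finally show ?thesis .
  qed
  have "potential a E w v = (if w = v then 1 else c)"
  proof (rule potential_unique)
    show "0 < a" "a \<le> 1" using a by auto
    show "(if v = v then 1 else c) = 1" "0 \<le> (if u = v then 1 else c) \<and> (if u = v then 1 else c) \<le> 1"
      for u using c_bounds by auto
    show "(if u = v then 1 else c) = (if out_nbrs E u = {} then 0
        else (1 - a) / real (card (out_nbrs E u)) * (\<Sum>i\<in>out_nbrs E u. if i = v then 1 else c))"
      if "u \<noteq> v" for u
    proof -
      have "real (card (UNIV - {u})) = n - 1"
        using n2 unfolding n_def by (simp add: card_Diff_singleton of_nat_diff)
      then show ?thesis using that neighbour_sum[OF that] fixed_point unfolding out by auto
    qed
  qed
  then show ?thesis unfolding c_def n_def .
qed

lemma out_nbrs_deviate_delete: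
  assumes "Ev \<subseteq> out_nbrs E v"
  shows "out_nbrs (deviate E v Ev None) v = Ev"
    and "w \<noteq> v \<Longrightarrow> out_nbrs (deviate E v Ev None) w = out_nbrs E w
            \<or> out_nbrs (deviate E v Ev None) w = out_nbrs E w - {v}"
  using assms unfolding deviate_def out_nbrs_def by auto

text \<open>In a complete graph every vertex is in best response for every jump probability:
  it cannot add an edge, and deleting edges lowers all potentials towards it (comparison
  principle) while its remaining neighbours all had the common potential c.\<close>

lemma complete_graph_best_response:
  fixes E :: "('a::finite \<times> 'a) set" and q :: "'a \<Rightarrow> real"
  assumes irr: "\<And>x. (x, x) \<notin> E" and comp: "\<And>x y. x \<noteq> y \<Longrightarrow> (x, y) \<in> E"
    and q_nonneg: "\<And>v. 0 \<le> q v" and a: "0 < a" "a < 1"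
  shows "best_response a q E v"
  unfolding best_response_def
proof (intro allI impI notI)
  fix Ev uo
  assume strategy: "is_strategy E v Ev uo \<and> admissible a q E v Ev uo"
    and gain: "pagerank a q (deviate E v Ev uo) v > pagerank a q E v"
  have out: "out_nbrs E u = UNIV - {u}" for u
    using irr comp unfolding out_nbrs_def by auto
  have no_add: "uo = None"
    using strategy unfolding is_strategy_def out by (cases uo) auto
  define D where "D = deviate E v Ev None"
  have Ev_sub: "Ev \<subseteq> out_nbrs E v" using strategy unfolding is_strategy_def by simp
  have out_D: "out_nbrs D v = Ev"
    unfolding D_def by (rule out_nbrs_deviate_delete(1)[OF Ev_sub])
  have Ev_ne: "Ev \<noteq> {}" using strategy no_add out_D unfolding is_strategy_def D_def by simp
  then obtain w0 where "w0 \<in> Ev" by auto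
  then have "card {v, w0} \<le> card (UNIV :: 'a set)" "w0 \<noteq> v"
    using Ev_sub unfolding out by (auto intro: card_mono)
  then have n2: "2 \<le> card (UNIV :: 'a set)" by simp
  define c where "c = (1 - a) / (1 + (real (card (UNIV :: 'a set)) - 2) * a)"
  have pot_E: "potential a E i v = c" if "i \<noteq> v" for i
    using complete_graph_potential[OF irr comp a n2] that unfolding c_def by simp
  have pot_le: "potential a D u v \<le> potential a E u v" for u
    using a out_nbrs_deviate_delete(2)[OF Ev_sub] unfolding D_def
    by (intro potential_mono_remove_arcs_into_target) auto
  have "(\<Sum>i\<in>Ev. potential a D i v) \<le> (\<Sum>i\<in>Ev. c)"
    using pot_le pot_E Ev_sub unfolding out by (intro sum_mono) (metis Diff_iff insertI1 subsetD)
  then have "(1 - a) / real (card Ev) * (\<Sum>i\<in>Ev. potential a D i v)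
      \<le> (1 - a) / real (card Ev) * (real (card Ev) * c)"
    using a by (intro mult_left_mono) auto
  also have "\<dots> = (1 - a) * c" using Ev_ne by (simp add: card_gt_0_iff)
  also have "\<dots> = (1 - a) / real (card (out_nbrs E v)) * (\<Sum>i\<in>out_nbrs E v. potential a E i v)"
    using n2 unfolding out by (simp add: pot_E card_Diff_singleton of_nat_diff)
  finally have "pagerank a q D v \<le> pagerank a q E v"
    using pot_le a q_nonneg unfolding out_D[symmetric] by (intro pagerank_le_pagerank) auto
  then show False using gain no_add unfolding D_def by simp
qed


lemma connected_out_nbrs_nonempty:
  fixes D :: "('a \<times> 'a) set"
  assumes conn: "\<And>x y. (x, y) \<in> D\<^sup>*" and "x \<noteq> w"
  shows "out_nbrs D w \<noteq> {}"
proof -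
  have "(w, x) \<in> D\<^sup>*" by (rule conn)
  then obtain y where "(w, y) \<in> D" using assms(2) by (cases rule: converse_rtranclE) auto
  then show ?thesis unfolding out_nbrs_def by auto
qed

text \<open>If x misses the vertex y, then x has less than half of the total degree, and gaining
  one edge (which adds 2 to the total degree) raises its degree share.\<close>

lemma degree_share_increases:
  fixes E :: "('a::finite \<times> 'a) set"
  assumes irr: "\<And>z. (z, z) \<notin> E" and ne: "\<And>w. out_nbrs E w \<noteq> {}"
    and xy: "x \<noteq> y" "y \<notin> out_nbrs E x"
  defines "d \<equiv> \<lambda>w. real (card (out_nbrs E w))"
  defines "T \<equiv> \<Sum>w\<in>UNIV. d w"
  shows "d x / T < (d x + 1) / (T + 2)"
proof -
  let ?S = "insert y (out_nbrs E x)"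
  have x_notin: "x \<notin> ?S" using xy irr unfolding out_nbrs_def by auto
  have d_ge_1: "1 \<le> d w" for w using ne[of w] unfolding d_def by (simp add: Suc_leI card_gt_0_iff)
  have "d x + (\<Sum>w\<in>?S. d w) = (\<Sum>w\<in>insert x ?S. d w)" using x_notin by simp
  also have "\<dots> \<le> T" unfolding T_def d_def by (rule sum_mono2) auto
  finally have "d x + (\<Sum>w\<in>?S. d w) \<le> T" .
  moreover have "(\<Sum>w\<in>?S. (1::real)) \<le> (\<Sum>w\<in>?S. d w)" using d_ge_1 by (intro sum_mono) auto
  moreover have "(\<Sum>w\<in>?S. (1::real)) = d x + 1"
    using xy unfolding d_def by (simp add: card_insert_disjoint)
  ultimately have "2 * d x < T" by linarith
  moreover have "0 < T" unfolding T_def using d_ge_1 by (intro sum_pos) (auto intro: less_le_trans[OF zero_less_one])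
  ultimately show ?thesis by (simp add: field_simps)
qed

text \<open>Adding a missing edge xy to a connected undirected graph raises the PageRank of x
  for all sufficiently small jump probabilities (compare the limiting degree shares).\<close>

lemma adding_edge_raises_pagerank:
  fixes E :: "('a::finite \<times> 'a) set" and q :: "'a \<Rightarrow> real"
  assumes sym: "sym E" and irr: "\<And>z. (z, z) \<notin> E" and conn: "\<And>z w. (z, w) \<in> E\<^sup>*"
    and q_sum: "(\<Sum>v\<in>UNIV. q v) = 1"
    and xy: "x \<noteq> y" "(x, y) \<notin> E"
  shows "\<forall>\<^sub>F k in sequentially.
    pagerank (alpha_seq k) q E x < pagerank (alpha_seq k) q (E \<union> {(x, y), (y, x)}) x"
proof -
  define E' where "E' = E \<union> {(x, y), (y, x)}"
  define d where "d w = real (card (out_nbrs E w))" for w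
  define T where "T = (\<Sum>w\<in>UNIV. d w)"
  have ne: "out_nbrs E w \<noteq> {}" for w
    using connected_out_nbrs_nonempty[OF conn] xy(1) by (cases "w = x") metis+
  have y_notin: "y \<notin> out_nbrs E x" and x_notin: "x \<notin> out_nbrs E y"
    using xy sym unfolding out_nbrs_def by (auto dest: symD)
  have sym': "sym E'" using sym unfolding E'_def sym_def by auto
  have conn': "(z, w) \<in> E'\<^sup>*" for z w
    using conn[of z w] rtrancl_mono[of E E'] unfolding E'_def by auto
  have ne': "out_nbrs E' w \<noteq> {}" for w using ne[of w] unfolding E'_def out_nbrs_def by auto
  have deg': "real (card (out_nbrs E' w))
      = d w + (if w = x then 1 else 0) + (if w = y then 1 else 0)" for w
  proof -
    have "out_nbrs E' w = (if w = x then insert y (out_nbrs E w)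
        else if w = y then insert x (out_nbrs E w) else out_nbrs E w)"
      using xy unfolding E'_def out_nbrs_def by auto
    then show ?thesis using xy y_notin x_notin unfolding d_def by (auto simp: card_insert_disjoint)
  qed
  have vol': "(\<Sum>w\<in>UNIV. real (card (out_nbrs E' w))) = T + 2"
    unfolding deg' T_def using xy by (simp add: sum.distrib)
  have "(\<lambda>k. pagerank (alpha_seq k) q E x) \<longlonglongrightarrow> d x / T"
    using pagerank_tends_to_degree_share[OF sym conn ne q_sum] unfolding T_def d_def .
  moreover have "(\<lambda>k. pagerank (alpha_seq k) q E' x) \<longlonglongrightarrow> (d x + 1) / (T + 2)"
    using pagerank_tends_to_degree_share[OF sym' conn' ne' q_sum, of x] deg'[of x] xy
    unfolding vol' by simp
  moreover have "d x / T < (d x + 1) / (T + 2)"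
    using degree_share_increases[OF irr ne xy(1) y_notin] unfolding d_def T_def .
  ultimately have "\<forall>\<^sub>F k in sequentially. 0 < pagerank (alpha_seq k) q E' x - pagerank (alpha_seq k) q E x"
    by (intro order_tendstoD(1)[of _ "(d x + 1) / (T + 2) - d x / T"] tendsto_diff) simp_all
  then show ?thesis unfolding E'_def by simp
qed

lemma missing_edge_not_best_response:
  fixes E :: "('a::finite \<times> 'a) set" and q :: "'a \<Rightarrow> real"
  assumes sym: "sym E" and irr: "\<And>z. (z, z) \<notin> E" and conn: "\<And>z w. (z, w) \<in> E\<^sup>*"
    and q_sum: "(\<Sum>v\<in>UNIV. q v) = 1"
    and uv: "u \<noteq> v" "(u, v) \<notin> E"
  shows "\<exists>a. 0 < a \<and> a < 1 \<and> \<not> best_response a q E v"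
proof -
  define E' where "E' = E \<union> {(u, v), (v, u)}"
  have vu: "(v, u) \<notin> E" using uv sym by (auto dest: symD)
  have E'_alt: "E \<union> {(v, u), (u, v)} = E'" unfolding E'_def by auto
  have "\<forall>\<^sub>F k in sequentially. pagerank (alpha_seq k) q E u < pagerank (alpha_seq k) q E' u
      \<and> pagerank (alpha_seq k) q E v < pagerank (alpha_seq k) q E' v"
    using adding_edge_raises_pagerank[OF sym irr conn q_sum uv, unfolded E'_def[symmetric]]
      adding_edge_raises_pagerank[OF sym irr conn q_sum uv(1)[symmetric] vu, unfolded E'_alt]
    by (rule eventually_conj)
  then obtain k where gain_u: "pagerank (alpha_seq k) q E u < pagerank (alpha_seq k) q E' u"
    and gain_v: "pagerank (alpha_seq k) q E v < pagerank (alpha_seq k) q E' v"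
    unfolding eventually_sequentially by auto
  have dev: "deviate E v (out_nbrs E v) (Some u) = E'"
    unfolding deviate_def E'_def by auto
  have "is_strategy E v (out_nbrs E v) (Some u)"
    using uv vu unfolding is_strategy_def dev by (auto simp: E'_def out_nbrs_def)
  moreover have "admissible (alpha_seq k) q E v (out_nbrs E v) (Some u)"
    unfolding admissible_def dev using gain_u by simp
  moreover have "pagerank (alpha_seq k) q E v
      < pagerank (alpha_seq k) q (deviate E v (out_nbrs E v) (Some u)) v"
    unfolding dev by (rule gain_v)
  ultimately have "\<not> best_response (alpha_seq k) q E v"
    unfolding best_response_def by blast
  then show ?thesis using alpha_seq_bounds[of k] by blast
qed

theorem theorem5p3:
  fixes E :: "('a::finite \<times> 'a) set" and q :: "'a \<Rightarrow> real"
  assumes "undirected_graph E"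
    and "connected_graph E"
    and "\<forall>v. q v \<ge> 0"
    and "(\<Sum>v\<in>UNIV. q v) = 1"
  shows "alpha_insensitive_equilibrium q E \<longleftrightarrow> complete_graph E"
proof -
  have sym: "sym E" and irr: "\<And>x. (x, x) \<notin> E"
    using assms(1) unfolding undirected_graph_def irrefl_def by auto
  have conn: "\<And>x y. (x, y) \<in> E\<^sup>*" using assms(2) unfolding connected_graph_def by auto
  show ?thesis
  proof
    assume equilibrium: "alpha_insensitive_equilibrium q E"
    show "complete_graph E"
      unfolding complete_graph_def
    proof (intro allI impI, rule ccontr)
      fix u v :: 'a
      assume "u \<noteq> v" "(u, v) \<notin> E"
      then obtain a where "0 < a" "a < 1" "\<not> best_response a q E v"
        using missing_edge_not_best_response[OF sym irr conn assms(4)] by blast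
      then show False
        using equilibrium unfolding alpha_insensitive_equilibrium_def nash_equilibrium_def by blast
    qed
  next
    assume "complete_graph E"
    then show "alpha_insensitive_equilibrium q E"
      unfolding alpha_insensitive_equilibrium_def nash_equilibrium_def complete_graph_def
      using complete_graph_best_response[OF irr] assms(3) by blast
  qed
qed

end
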